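(* Let $T$ be a string of length $n$ over an alphabet $\Sigma$, and let $1\le i\le j<n$. Let $d=j-i+1$ and let $\sigma'$ be the number of distinct characters occurring in $T[i..j]$. Then $|\mathsf{MAW}(T[i..j+1])\setminus\mathsf{MAW}(T[i..j])|\le\sigma'+d$.
   Context: For a string $S$ over alphabet $\Sigma$, a string $w\in\Sigma^*$ is a minimal absent word (MAW) of $S$ if $w$ does not occur in $S$ but every proper substring of $w$ (including the empty string) occurs in $S$; $\mathsf{MAW}(S)$ is the set of all MAWs of $S$. $T[a..b]$ denotes the substring of $T$ from position $a$ to $b$. *)

theory Defs
  imports Main "HOL-Library.Sublist"
begin

text \<open>1-indexed substring T[a..b] (inclusive).\<close>
definition substr :: "'a list \<Rightarrow> nat \<Rightarrow> nat \<Rightarrow> 'a list" where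
  "substr T a b = take (Suc b - a) (drop (a - 1) T)"

definition MAW :: "'a set \<Rightarrow> 'a list \<Rightarrow> 'a list set" where
  "MAW Alph S = {w. set w \<subseteq> Alph \<and> \<not> sublist w S \<and>
      (\<forall>u. sublist u w \<and> u \<noteq> w \<longrightarrow> sublist u S)}"

end

theory Submission
  imports Defs
begin

text \<open>A new minimal absent word of \<open>S @ [c]\<close> has the form \<open>a # x @ [b]\<close>, where \<open>a # x\<close>
  and \<open>x @ [b]\<close> occur in \<open>S @ [c]\<close> but one of them does not occur in \<open>S\<close> and so is a
  suffix of \<open>S @ [c]\<close>. If \<open>x @ [b]\<close> occurs in \<open>S\<close>, then \<open>a # x\<close> is a suffix of
  \<open>S @ [c]\<close> and the word is determined by its last letter \<open>b\<close>, a letter of \<open>S\<close>: of two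
  such words with the same \<open>b\<close>, the shorter \<open>a # x\<close> would lie in the other's \<open>x @ [b]\<close>,
  hence in \<open>S\<close>. Otherwise \<open>b = c\<close> and \<open>x\<close> is a suffix of \<open>S\<close>, and the word is
  determined by the end position of any occurrence of \<open>a # x\<close> in \<open>S @ [c]\<close> (represented
  by the prefix of \<open>S @ [c]\<close> ending there): a shorter \<open>a # x\<close> ending at the same position
  would be a suffix of \<open>S\<close>, making the whole word occur in \<open>S @ [c]\<close>. For the same reason
  that position is not the end of \<open>S\<close>, which leaves \<open>length S\<close> possible positions.\<close>

lemma card_le_card_if_unique_witness:
  assumes "finite B"
    and "\<And>x. x \<in> A \<Longrightarrow> \<exists>y\<in>B. R x y"
    and "\<And>x x' y. x \<in> A \<Longrightarrow> x' \<in> A \<Longrightarrow> R x y \<Longrightarrow> R x' y \<Longrightarrow> x = x'"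
  shows "card A \<le> card B"
proof -
  obtain f where f: "\<And>x. x \<in> A \<Longrightarrow> f x \<in> B \<and> R x (f x)"
    using assms(2) by metis
  have "inj_on f A"
    by (rule inj_onI) (metis f assms(3))
  with f show ?thesis
    by (intro card_inj_on_le[OF _ _ assms(1)]) auto
qed

lemma suffixes_Cons_eq:
  assumes "suffix (a # x) T" "suffix (a' # x') T"
    and "\<not> suffix (a # x) x'" "\<not> suffix (a' # x') x"
  shows "a # x = a' # x'"
  using suffix_same_cases[OF assms(1,2)] assms(3,4) by (auto simp: suffix_Cons)

lemma sublist_butlast_or_tl:
  assumes "sublist u w" "u \<noteq> w"
  shows "sublist u (butlast w) \<or> sublist u (tl w)"
proof -
  obtain p q where w: "w = p @ u @ q"
    using assms(1) by (auto simp: sublist_def)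
  show ?thesis
  proof (cases q rule: rev_cases)
    case Nil
    with w assms(2) obtain z p' where "p = z # p'"
      by (cases p) auto
    with w Nil have "tl w = p' @ u" by simp
    then show ?thesis by simp
  next
    case (snoc q' z)
    with w have "butlast w = p @ u @ q'" by (simp add: butlast_append)
    then show ?thesis by simp
  qed
qed

lemma MAW_iff:
  "w \<in> MAW A S \<longleftrightarrow>
     set w \<subseteq> A \<and> \<not> sublist w S \<and> sublist (butlast w) S \<and> sublist (tl w) S"
proof
  assume w: "w \<in> MAW A S"
  then have "w \<noteq> []" by (auto simp: MAW_def)
  then have "length (butlast w) < length w" "length (tl w) < length w"
    by simp_all
  then have "butlast w \<noteq> w" "tl w \<noteq> w"
    by (metis less_irrefl)+
  with w show "set w \<subseteq> A \<and> \<not> sublist w S \<and> sublist (butlast w) S \<and> sublist (tl w) S"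
    by (auto simp: MAW_def)
next
  assume "set w \<subseteq> A \<and> \<not> sublist w S \<and> sublist (butlast w) S \<and> sublist (tl w) S"
  then show "w \<in> MAW A S"
    unfolding MAW_def
    using sublist_butlast_or_tl sublist_order.order_trans by blast
qed

lemma MAW_snoc_diffE:
  assumes "w \<in> MAW A (S @ [c]) - MAW A S"
  obtains a x b where "w = a # x @ [b]" "\<not> sublist (a # x @ [b]) (S @ [c])"
    "sublist (a # x) (S @ [c])" "sublist (x @ [b]) (S @ [c])"
    "\<not> sublist (a # x) S \<or> \<not> sublist (x @ [b]) S"
proof -
  have new: "set w \<subseteq> A" "\<not> sublist w (S @ [c])"
    "sublist (butlast w) (S @ [c])" "sublist (tl w) (S @ [c])"
    using assms by (auto simp: MAW_iff)
  then have "\<not> sublist w S"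
    using sublist_order.order_trans by blast
  with new assms have absent: "\<not> sublist (butlast w) S \<or> \<not> sublist (tl w) S"
    by (auto simp: MAW_iff)
  then obtain a w' where w: "w = a # w'"
    by (cases w) auto
  with absent obtain x b where "w' = x @ [b]"
    by (cases w' rule: rev_cases) auto
  with w new absent that show thesis
    by (simp add: butlast_append)
qed

lemma MAW_snoc_diff_old_tailE:
  assumes "w \<in> MAW A (S @ [c]) - MAW A S" "sublist (tl w) S"
  obtains a x b where "w = a # x @ [b]" "sublist (x @ [b]) S" "suffix (a # x) (S @ [c])"
    "\<not> sublist (a # x) S"
proof -
  obtain a x b where w: "w = a # x @ [b]"
    and "sublist (a # x) (S @ [c])" "\<not> sublist (a # x) S \<or> \<not> sublist (x @ [b]) S"
    using assms(1) by (rule MAW_snoc_diffE)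
  moreover have "sublist (x @ [b]) S"
    using assms(2) w by simp
  ultimately show thesis
    using that by (auto simp: sublist_snoc simp del: suffix_snoc)
qed

lemma MAW_snoc_diff_new_tailE:
  assumes "w \<in> MAW A (S @ [c]) - MAW A S" "\<not> sublist (tl w) S"
  obtains a x where "w = a # x @ [c]" "suffix x S" "sublist (a # x) (S @ [c])"
    "\<not> suffix (a # x) S"
proof -
  obtain a x b where w: "w = a # x @ [b]"
    and absent: "\<not> sublist (a # x @ [b]) (S @ [c])"
    and "sublist (a # x) (S @ [c])" "sublist (x @ [b]) (S @ [c])"
    using assms(1) by (rule MAW_snoc_diffE)
  moreover have "\<not> sublist (x @ [b]) S"
    using assms(2) w by simp
  ultimately have "b = c" "suffix x S"
    by (auto simp: sublist_snoc)
  moreover from absent \<open>b = c\<close> have "\<not> suffix (a # x) S"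
    by (metis append_Cons snoc_suffix_snoc suffix_imp_sublist)
  ultimately show thesis
    using that w \<open>sublist (a # x) (S @ [c])\<close> by blast
qed

lemma MAW_snoc_diff_old_tail_eqI:
  assumes "w \<in> MAW A (S @ [c]) - MAW A S" "sublist (tl w) S"
    and "w' \<in> MAW A (S @ [c]) - MAW A S" "sublist (tl w') S"
    and "last w = last w'"
  shows "w = w'"
proof -
  obtain a x b where w: "w = a # x @ [b]" "sublist (x @ [b]) S"
    and suffix: "suffix (a # x) (S @ [c])" and absent: "\<not> sublist (a # x) S"
    using assms(1,2) by (rule MAW_snoc_diff_old_tailE)
  obtain a' x' b' where w': "w' = a' # x' @ [b']" "sublist (x' @ [b']) S"
    and suffix': "suffix (a' # x') (S @ [c])" and absent': "\<not> sublist (a' # x') S"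
    using assms(3,4) by (rule MAW_snoc_diff_old_tailE)
  have "b' = b"
    using assms(5) w w' by simp
  with w w' absent absent' have "\<not> suffix (a # x) x'" "\<not> suffix (a' # x') x"
    by (meson sublist_append_rightI sublist_order.order_trans suffix_imp_sublist)+
  with suffix suffix' have "a # x = a' # x'"
    by (intro suffixes_Cons_eq)
  with w w' \<open>b' = b\<close> show ?thesis by simp
qed

lemma MAW_snoc_diff_new_tail_eqI:
  assumes "w \<in> MAW A (S @ [c]) - MAW A S" "\<not> sublist (tl w) S"
    and "w' \<in> MAW A (S @ [c]) - MAW A S" "\<not> sublist (tl w') S"
    and "suffix (butlast w) P" "suffix (butlast w') P"
  shows "w = w'"
proof -
  obtain a x where w: "w = a # x @ [c]" "suffix x S" "sublist (a # x) (S @ [c])"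
    "\<not> suffix (a # x) S"
    using assms(1,2) by (rule MAW_snoc_diff_new_tailE)
  obtain a' x' where w': "w' = a' # x' @ [c]" "suffix x' S" "sublist (a' # x') (S @ [c])"
    "\<not> suffix (a' # x') S"
    using assms(3,4) by (rule MAW_snoc_diff_new_tailE)
  have "suffix (a # x) P" "suffix (a' # x') P"
    using assms(5,6) w w' by (simp_all add: butlast_append)
  moreover have "\<not> suffix (a # x) x'" "\<not> suffix (a' # x') x"
    using w(2,4) w'(2,4) by (meson suffix_order.trans)+
  ultimately have "a # x = a' # x'"
    by (rule suffixes_Cons_eq)
  with w w' show ?thesis by simp
qed

lemma card_MAW_snoc_diff_old_tail:
  "card {w \<in> MAW A (S @ [c]) - MAW A S. sublist (tl w) S} \<le> card (set S)"
proof (rule card_le_card_if_unique_witness[where R = "\<lambda>w b. last w = b"])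
  fix w assume "w \<in> {w \<in> MAW A (S @ [c]) - MAW A S. sublist (tl w) S}"
  then obtain a x b where "w = a # x @ [b]" "sublist (x @ [b]) S"
    by (elim CollectE conjE MAW_snoc_diff_old_tailE) blast
  then show "\<exists>b\<in>set S. last w = b"
    by (auto simp: sublist_def)
next
  fix w w' b
  assume "w \<in> {w \<in> MAW A (S @ [c]) - MAW A S. sublist (tl w) S}" "last w = b"
    and "w' \<in> {w \<in> MAW A (S @ [c]) - MAW A S. sublist (tl w) S}" "last w' = b"
  then show "w = w'"
    by (intro MAW_snoc_diff_old_tail_eqI[of w A S c w']) simp_all
qed simp

lemma card_MAW_snoc_diff_new_tail:
  assumes "S \<noteq> []"
  shows "card {w \<in> MAW A (S @ [c]) - MAW A S. \<not> sublist (tl w) S} \<le> length S"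
proof -
  have "card {w \<in> MAW A (S @ [c]) - MAW A S. \<not> sublist (tl w) S}
      \<le> card (set (prefixes (S @ [c])) - {[], S})"
  proof (rule card_le_card_if_unique_witness[where R = "\<lambda>w P. suffix (butlast w) P"])
    fix w assume "w \<in> {w \<in> MAW A (S @ [c]) - MAW A S. \<not> sublist (tl w) S}"
    then obtain a x where w: "w = a # x @ [c]" "sublist (a # x) (S @ [c])" "\<not> suffix (a # x) S"
      by (elim CollectE conjE MAW_snoc_diff_new_tailE) blast
    then obtain P where "prefix P (S @ [c])" and P: "suffix (a # x) P"
      by (auto simp: sublist_altdef)
    then have "P \<in> set (prefixes (S @ [c]))"
      by (simp only: in_set_prefixes)
    moreover from P w have "P \<noteq> []" "P \<noteq> S" "suffix (butlast w) P"
      by (auto simp: butlast_append)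
    ultimately show "\<exists>P\<in>set (prefixes (S @ [c])) - {[], S}. suffix (butlast w) P"
      by blast
  next
    fix w w' P
    assume "w \<in> {w \<in> MAW A (S @ [c]) - MAW A S. \<not> sublist (tl w) S}" "suffix (butlast w) P"
      and "w' \<in> {w \<in> MAW A (S @ [c]) - MAW A S. \<not> sublist (tl w) S}" "suffix (butlast w') P"
    then show "w = w'"
      by (intro MAW_snoc_diff_new_tail_eqI[of w A S c w' P]) simp_all
  qed simp
  also have "\<dots> = length S"
  proof -
    have "{[], S} \<subseteq> set (prefixes (S @ [c]))"
      by (simp add: set_prefixes_eq del: prefixes_snoc)
    with assms show ?thesis
      by (simp add: card_Diff_subset del: prefixes_snoc)
  qed
  finally show ?thesis .
qed

lemma card_MAW_snoc_diff:
  assumes "S \<noteq> []"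
  shows "card (MAW A (S @ [c]) - MAW A S) \<le> card (set S) + length S"
proof -
  let ?D = "MAW A (S @ [c]) - MAW A S"
  have "card ?D = card ({w \<in> ?D. sublist (tl w) S} \<union> {w \<in> ?D. \<not> sublist (tl w) S})"
    by (rule arg_cong[where f = card]) blast
  also have "\<dots> \<le> card {w \<in> ?D. sublist (tl w) S} + card {w \<in> ?D. \<not> sublist (tl w) S}"
    by (rule card_Un_le)
  also have "\<dots> \<le> card (set S) + length S"
    using card_MAW_snoc_diff_old_tail card_MAW_snoc_diff_new_tail[OF assms]
    by (rule add_mono)
  finally show ?thesis .
qed

lemma length_substr: "length (substr T i j) = min (Suc j - i) (length T - (i - 1))"
  by (simp add: substr_def)

lemma substr_Suc:
  assumes "1 \<le> i" "i \<le> Suc j" "j < length T"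
  shows "substr T i (Suc j) = substr T i j @ [T ! j]"
  using assms by (simp add: substr_def take_Suc_conv_app_nth Suc_diff_le)

theorem lemma11:
  fixes Alph :: "'a set" and T :: "'a list" and i j :: nat
  assumes "set T \<subseteq> Alph"
    and "1 \<le> i" and "i \<le> j" and "j < length T"
  shows "card (MAW Alph (substr T i (j + 1)) - MAW Alph (substr T i j))
           \<le> card (set (substr T i j)) + (j - i + 1)"
proof -
  \<comment> \<open>The bound holds for every alphabet.\<close>
  have "length (substr T i j) = j - i + 1"
    using assms by (simp add: length_substr)
  moreover have "substr T i (j + 1) = substr T i j @ [T ! j]"
    using assms by (simp add: substr_Suc)
  ultimately show ?thesis
    using card_MAW_snoc_diff[of "substr T i j" Alph "T ! j"] by fastforce
qed

end
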